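(* Let $B$ be a compact oriented $3$-manifold, $L\subset B$ a compact $1$-dimensional submanifold, and $\mathcal{V}_\chi$ an orthogonal flat affine orbifold bundle over $(B,L)$ with fibre a real vector space $V$ with quadratic form of signature $(3,q)$, whose orbifold involutions are reflections in vectors of square $-2$. If $\mathcal{V}_\chi$ admits a maximal positive section $h$, then the Riemannian metric on $B\setminus L$ induced by $h$ has non-negative Ricci curvature.
   Context: $B$ is regarded as an orbifold modelled near $L$ on $(\mathbb{R}\times\mathbb{C})/\sigma$, $\sigma(t,z)=(t,-z)$. The bundle is given by charts $U_\alpha$ with trivialisations $U_\alpha\times V$ away from $L$, and near $L$ by $\tilde U_\alpha/\sigma$ together with affine involutions $\tau_\alpha(v)=v+(\delta_\alpha,v)\delta_\alpha+\lambda_\alpha\delta_\alpha$, $(\delta_\alpha,\delta_\alpha)=-2$; transitions are locally constant affine isometries. A section is given locally by smooth maps $f_\alpha$ into $V$ ($\sigma$-equivariant: $f_\alpha(\sigma x)=\tau_\alpha(f_\alpha(x))$ near $L$). It is positive if away from $L$ each $f_\alpha$ is an immersion whose tangent spaces are positive definite $3$-dimensional subspaces, and near each point $x_0$ of the fixed line of $\sigma$: $Df_\alpha(x_0)$ vanishes on $\mathbb{C}$ with image spanned by $v_0$, $D^2f_\alpha(x_0)|_{\mathbb{C}}=v_1\mathrm{Re}z^2+v_2\mathrm{Im}z^2$, and $v_0,v_1,v_2$ span a maximal positive subspace of $\delta_\alpha^\perp$. It is maximal positive if, in addition, away from $L$ the local images $f_\alpha(U_\alpha)$ are maximal submanifolds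 (zero mean curvature for the induced metric). The induced metric on $B\setminus L$ is the pullback of the quadratic form of $V$ by $df_\alpha$. *)

theory Defs imports "HOL-Analysis.Analysis" begin

definition pd :: "'i::finite \<Rightarrow> (real^'i \<Rightarrow> 'b::real_normed_vector) \<Rightarrow> real^'i \<Rightarrow> 'b" where
  "pd i g = (\<lambda>x. frechet_derivative g (at x) (axis i 1))"

definition iter_pd :: "'i::finite list \<Rightarrow> (real^'i \<Rightarrow> 'b::real_normed_vector) \<Rightarrow> real^'i \<Rightarrow> 'b" where
  "iter_pd is g = foldr pd is g"

definition smooth_on :: "(real^'i::finite) set \<Rightarrow> (real^'i \<Rightarrow> 'b::real_normed_vector) \<Rightarrow> bool" where
  "smooth_on U g \<longleftrightarrow> (\<forall>is. \<forall>x\<in>U. iter_pd is g differentiable (at x))"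

definition pos_def_on :: "('v \<Rightarrow> 'v \<Rightarrow> real) \<Rightarrow> 'v::real_vector set \<Rightarrow> bool" where
  "pos_def_on Q S \<longleftrightarrow> (\<forall>x\<in>S. x \<noteq> 0 \<longrightarrow> Q x x > 0)"

definition signature_form :: "('v::euclidean_space \<Rightarrow> 'v \<Rightarrow> real) \<Rightarrow> nat \<Rightarrow> nat \<Rightarrow> bool" where
  "signature_form Q p q \<longleftrightarrow>
     bilinear Q \<and> (\<forall>x y. Q x y = Q y x) \<and> (\<forall>x. (\<forall>y. Q x y = 0) \<longrightarrow> x = 0) \<and>
     (\<exists>S. subspace S \<and> dim S = p \<and> pos_def_on Q S) \<and>
     (\<forall>S. subspace S \<and> pos_def_on Q S \<longrightarrow> dim S \<le> p) \<and>
     DIM('v) = p + q"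

definition tangent :: "(real^'i::finite \<Rightarrow> 'v::real_normed_vector) \<Rightarrow> real^'i \<Rightarrow> real^'i \<Rightarrow> 'v" where
  "tangent f x v = (\<Sum>i\<in>UNIV. v $ i *\<^sub>R pd i f x)"

definition positive_immersion_on :: "('v \<Rightarrow> 'v \<Rightarrow> real) \<Rightarrow> (real^'i::finite) set \<Rightarrow> (real^'i \<Rightarrow> 'v::real_normed_vector) \<Rightarrow> bool" where
  "positive_immersion_on Q U f \<longleftrightarrow>
     (\<forall>x\<in>U. f differentiable (at x) \<and> (\<forall>v. v \<noteq> 0 \<longrightarrow> Q (tangent f x v) (tangent f x v) > 0))"

definition ind_metric :: "('v \<Rightarrow> 'v \<Rightarrow> real) \<Rightarrow> (real^'i::finite \<Rightarrow> 'v::real_normed_vector) \<Rightarrow> real^'i \<Rightarrow> real^'i^'i" where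
  "ind_metric Q f x = (\<chi> i j. Q (pd i f x) (pd j f x))"

definition ginv :: "('v \<Rightarrow> 'v \<Rightarrow> real) \<Rightarrow> (real^'i::finite \<Rightarrow> 'v::real_normed_vector) \<Rightarrow> real^'i \<Rightarrow> real^'i^'i" where
  "ginv Q f x = matrix_inv (ind_metric Q f x)"

definition normal_part :: "('v \<Rightarrow> 'v \<Rightarrow> real) \<Rightarrow> (real^'i::finite \<Rightarrow> 'v::real_normed_vector) \<Rightarrow> real^'i \<Rightarrow> 'v \<Rightarrow> 'v" where
  "normal_part Q f x w =
     w - (\<Sum>k\<in>UNIV. \<Sum>l\<in>UNIV. (ginv Q f x $ k $ l * Q w (pd l f x)) *\<^sub>R pd k f x)"

definition mean_curv :: "('v \<Rightarrow> 'v \<Rightarrow> real) \<Rightarrow> (real^'i::finite \<Rightarrow> 'v::real_normed_vector) \<Rightarrow> real^'i \<Rightarrow> 'v" where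
  "mean_curv Q f x =
     (\<Sum>i\<in>UNIV. \<Sum>j\<in>UNIV. ginv Q f x $ i $ j *\<^sub>R normal_part Q f x (pd i (pd j f) x))"

definition maximal_on :: "('v \<Rightarrow> 'v \<Rightarrow> real) \<Rightarrow> (real^'i::finite) set \<Rightarrow> (real^'i \<Rightarrow> 'v::real_normed_vector) \<Rightarrow> bool" where
  "maximal_on Q U f \<longleftrightarrow> (\<forall>x\<in>U. mean_curv Q f x = 0)"

definition christoffel :: "('v \<Rightarrow> 'v \<Rightarrow> real) \<Rightarrow> (real^'i::finite \<Rightarrow> 'v::real_normed_vector) \<Rightarrow> 'i \<Rightarrow> 'i \<Rightarrow> 'i \<Rightarrow> real^'i \<Rightarrow> real" where
  "christoffel Q f k i j x =
     1/2 * (\<Sum>l\<in>UNIV. ginv Q f x $ k $ l *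
        (pd i (\<lambda>y. ind_metric Q f y $ j $ l) x + pd j (\<lambda>y. ind_metric Q f y $ i $ l) x
         - pd l (\<lambda>y. ind_metric Q f y $ i $ j) x))"

text \<open>Riemann tensor R(d_i,d_j)d_k = R^l_ijk d_l, with R(X,Y)Z = nabla_X nabla_Y Z - nabla_Y nabla_X Z - nabla_[X,Y] Z.\<close>
definition riemann :: "('v \<Rightarrow> 'v \<Rightarrow> real) \<Rightarrow> (real^'i::finite \<Rightarrow> 'v::real_normed_vector) \<Rightarrow> 'i \<Rightarrow> 'i \<Rightarrow> 'i \<Rightarrow> 'i \<Rightarrow> real^'i \<Rightarrow> real" where
  "riemann Q f l i j k x =
     pd i (\<lambda>y. christoffel Q f l j k y) x - pd j (\<lambda>y. christoffel Q f l i k y) x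
     + (\<Sum>m\<in>UNIV. christoffel Q f l i m x * christoffel Q f m j k x
                 - christoffel Q f l j m x * christoffel Q f m i k x)"

definition ricci :: "('v \<Rightarrow> 'v \<Rightarrow> real) \<Rightarrow> (real^'i::finite \<Rightarrow> 'v::real_normed_vector) \<Rightarrow> 'i \<Rightarrow> 'i \<Rightarrow> real^'i \<Rightarrow> real" where
  "ricci Q f j k x = (\<Sum>i\<in>UNIV. riemann Q f i i j k x)"

definition nonneg_ricci_on :: "('v \<Rightarrow> 'v \<Rightarrow> real) \<Rightarrow> (real^'i::finite) set \<Rightarrow> (real^'i \<Rightarrow> 'v::real_normed_vector) \<Rightarrow> bool" where
  "nonneg_ricci_on Q U f \<longleftrightarrow>
     (\<forall>x\<in>U. \<forall>v::real^'i. 0 \<le> (\<Sum>j\<in>UNIV. \<Sum>k\<in>UNIV. ricci Q f j k x * v $ j * v $ k))"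

end

theory Submission
  imports Defs "HOL-Analysis.Analysis"
begin

text \<open>By the Gauss formula the second derivatives of a spacelike immersion split into a tangential
  part, given by the Christoffel symbols of the induced metric g, and a normal part, the second
  fundamental form II. The Gauss equation then gives
  Ric(v,v) = Q(H, II(v,v)) - tr_g Q(II(-,v), II(-,v)), where H = tr_g II is the mean curvature.
  For a maximal immersion H = 0. The tangent space is a positive definite subspace of the maximal
  dimension 3 allowed by the signature (3,q), so Q is negative semidefinite on its Q-orthogonal
  complement, which contains the values of II; hence the trace is nonpositive and Ric(v,v) >= 0.\<close>

section \<open>Partial derivatives\<close>

lemma pd_eq_derivative: "(h has_derivative D) (at x) \<Longrightarrow> pd i h x = D (axis i 1)"
  unfolding pd_def using frechet_derivative_at by metis

lemma pd_cong_open: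
  assumes "open U" "x \<in> U" "\<And>y. y \<in> U \<Longrightarrow> h y = k y"
  shows "pd i h x = pd i k x"
proof -
  have "(h has_derivative D) (at x) \<longleftrightarrow> (k has_derivative D) (at x)" for D
    using has_derivative_transform_within_open[OF _ assms(1,2)] assms(3) by metis
  then show ?thesis unfolding pd_def frechet_derivative_def by simp
qed

lemma differentiable_cong_open:
  assumes "open U" "x \<in> U" "\<And>y. y \<in> U \<Longrightarrow> h y = k y" "k differentiable (at x)"
  shows "h differentiable (at x)"
  using assms has_derivative_transform_within_open[OF _ assms(1,2)]
  unfolding differentiable_def by metis

lemma pd_const: "pd i (\<lambda>y. c) x = 0"
  by (rule pd_eq_derivative[where D = "\<lambda>v. 0", simplified]) simp

lemma pd_mult:
  fixes a b :: "real^'n \<Rightarrow> real"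
  assumes "a differentiable (at x)" "b differentiable (at x)"
  shows "pd i (\<lambda>y. a y * b y) x = pd i a x * b x + a x * pd i b x"
proof -
  obtain A B where A: "(a has_derivative A) (at x)" and B: "(b has_derivative B) (at x)"
    using assms unfolding differentiable_def by blast
  show ?thesis
    using pd_eq_derivative[OF has_derivative_mult[OF A B]] pd_eq_derivative[OF A] pd_eq_derivative[OF B]
    by simp
qed

lemma pd_sum:
  assumes "finite A" "\<And>m. m \<in> A \<Longrightarrow> h m differentiable (at x)"
  shows "pd i (\<lambda>y. \<Sum>m\<in>A. h m y) x = (\<Sum>m\<in>A. pd i (h m) x)"
proof -
  have "((\<lambda>y. \<Sum>m\<in>A. h m y) has_derivative (\<lambda>v. \<Sum>m\<in>A. frechet_derivative (h m) (at x) v)) (at x)"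
    using assms by (intro has_derivative_sum) (simp add: frechet_derivative_works)
  then show ?thesis unfolding pd_def by (simp add: pd_eq_derivative[unfolded pd_def])
qed

lemma pd_inner_left:
  assumes "h differentiable (at x)"
  shows "pd i (\<lambda>y. h y \<bullet> b) x = pd i h x \<bullet> b"
proof -
  obtain D where D: "(h has_derivative D) (at x)" using assms unfolding differentiable_def by blast
  show ?thesis
    using pd_eq_derivative[OF has_derivative_inner_left[OF D]] pd_eq_derivative[OF D] by simp
qed

lemma has_real_derivative_along_axis:
  assumes "h differentiable (at (p + s *\<^sub>R axis i 1))"
  shows "((\<lambda>s. h (p + s *\<^sub>R axis i 1)) has_real_derivative pd i h (p + s *\<^sub>R axis i 1)) (at s)"
proof -
  let ?D = "frechet_derivative h (at (p + s *\<^sub>R axis i 1))"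
  have D: "(h has_derivative ?D) (at (p + s *\<^sub>R axis i 1))"
    using assms frechet_derivative_works by blast
  have "((\<lambda>s. p + s *\<^sub>R axis i 1) has_derivative (\<lambda>t. t *\<^sub>R axis i 1)) (at s)"
    by (auto intro!: derivative_eq_intros)
  from has_derivative_compose[OF this D]
  have "((\<lambda>s. h (p + s *\<^sub>R axis i 1)) has_derivative (\<lambda>t. ?D (t *\<^sub>R axis i 1))) (at s)" .
  moreover have "?D (t *\<^sub>R axis i 1) = ?D (axis i 1) * t" for t
    using linear_scale[OF has_derivative_linear[OF D]] by simp
  ultimately show ?thesis by (simp add: has_field_derivative_def pd_def)
qed

lemma differentiable_det:
  fixes M :: "real^'m \<Rightarrow> real^'n^'n"
  assumes "\<And>a b. (\<lambda>y. M y $ a $ b) differentiable (at x)"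
  shows "(\<lambda>y. det (M y)) differentiable (at x)"
proof -
  obtain D where D: "\<And>a b. ((\<lambda>y. M y $ a $ b) has_derivative D a b) (at x)"
    using assms unfolding differentiable_def by metis
  have "(\<lambda>y. \<Prod>i\<in>UNIV. M y $ i $ p i) differentiable (at x)" for p :: "'n \<Rightarrow> 'n"
    using has_derivative_prod[of UNIV "\<lambda>i y. M y $ i $ p i", OF D] unfolding differentiable_def by blast
  then show ?thesis
    unfolding det_def by (intro differentiable_sum differentiable_mult differentiable_const ballI)
      (simp_all add: finite_permutations)
qed

section \<open>Symmetry of second derivatives\<close>

lemma dist_add_axes: "dist (x::real^'n) (x + s *\<^sub>R axis i 1 + u *\<^sub>R axis j 1) \<le> \<bar>s\<bar> + \<bar>u\<bar>"
proof -
  have "dist x (x + (s *\<^sub>R axis i 1 + u *\<^sub>R axis j 1)) = norm (s *\<^sub>R axis i (1::real) + u *\<^sub>R axis j 1)"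
    by (subst dist_commute) (simp add: dist_norm)
  also have "\<dots> \<le> norm (s *\<^sub>R axis i (1::real)) + norm (u *\<^sub>R axis j (1::real))"
    by (rule norm_triangle_ineq)
  finally show ?thesis by (simp add: add.assoc)
qed

lemma second_difference_mvt:
  fixes h :: "real^'n \<Rightarrow> real"
  assumes ball: "ball x r \<subseteq> U"
    and dh: "\<And>y. y \<in> U \<Longrightarrow> h differentiable (at y)"
    and dhi: "\<And>y. y \<in> U \<Longrightarrow> pd i h differentiable (at y)"
    and t: "0 < t" "2 * t < r"
  obtains \<xi> \<eta> where "0 < \<xi>" "\<xi> < t" "0 < \<eta>" "\<eta> < t"
    "h (x + t *\<^sub>R axis i 1 + t *\<^sub>R axis j 1) - h (x + t *\<^sub>R axis i 1) - h (x + t *\<^sub>R axis j 1) + h x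
       = t * t * pd j (pd i h) (x + \<xi> *\<^sub>R axis i 1 + \<eta> *\<^sub>R axis j 1)"
proof -
  have inU: "x + s *\<^sub>R axis i 1 + u *\<^sub>R axis j 1 \<in> U" if "0 \<le> s" "s \<le> t" "0 \<le> u" "u \<le> t" for s u
  proof -
    have "dist x (x + s *\<^sub>R axis i 1 + u *\<^sub>R axis j 1) < r"
      using dist_add_axes[of x s i u j] that t by linarith
    then show ?thesis using ball by auto
  qed
  define \<phi> where "\<phi> s = h (x + t *\<^sub>R axis j 1 + s *\<^sub>R axis i 1) - h (x + s *\<^sub>R axis i 1)" for s
  have d\<phi>: "(\<phi> has_real_derivative
      pd i h (x + t *\<^sub>R axis j 1 + s *\<^sub>R axis i 1) - pd i h (x + s *\<^sub>R axis i 1)) (at s)"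
    if "0 \<le> s" "s \<le> t" for s
  proof -
    have "x + t *\<^sub>R axis j 1 + s *\<^sub>R axis i 1 \<in> U" "x + s *\<^sub>R axis i 1 \<in> U"
      using inU[of s t] inU[of s 0] that t by (simp_all add: algebra_simps)
    then show ?thesis unfolding \<phi>_def
      by (intro derivative_intros has_real_derivative_along_axis dh)
  qed
  obtain \<xi> where \<xi>: "0 < \<xi>" "\<xi> < t" "\<phi> t - \<phi> 0 =
      t * (pd i h (x + t *\<^sub>R axis j 1 + \<xi> *\<^sub>R axis i 1) - pd i h (x + \<xi> *\<^sub>R axis i 1))"
    using MVT2[OF t(1) d\<phi>] by auto
  define \<psi> where "\<psi> u = pd i h (x + \<xi> *\<^sub>R axis i 1 + u *\<^sub>R axis j 1)" for u
  have d\<psi>: "(\<psi> has_real_derivative pd j (pd i h) (x + \<xi> *\<^sub>R axis i 1 + u *\<^sub>R axis j 1)) (at u)"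
    if "0 \<le> u" "u \<le> t" for u
    unfolding \<psi>_def using inU[of \<xi> u] that \<xi> by (intro has_real_derivative_along_axis dhi) auto
  obtain \<eta> where \<eta>: "0 < \<eta>" "\<eta> < t"
      "\<psi> t - \<psi> 0 = t * pd j (pd i h) (x + \<xi> *\<^sub>R axis i 1 + \<eta> *\<^sub>R axis j 1)"
    using MVT2[OF t(1) d\<psi>] by auto
  have "h (x + t *\<^sub>R axis i 1 + t *\<^sub>R axis j 1) - h (x + t *\<^sub>R axis i 1) - h (x + t *\<^sub>R axis j 1) + h x
      = \<phi> t - \<phi> 0" unfolding \<phi>_def by (simp add: algebra_simps)
  also have "\<dots> = t * (\<psi> t - \<psi> 0)" using \<xi>(3) unfolding \<psi>_def by (simp add: algebra_simps)
  also have "\<dots> = t * t * pd j (pd i h) (x + \<xi> *\<^sub>R axis i 1 + \<eta> *\<^sub>R axis j 1)"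
    using \<eta>(3) by simp
  finally show ?thesis using that \<xi> \<eta> by blast
qed

text \<open>Both mixed partials are limits of the same second difference, evaluated by
  second_difference_mvt in either order.\<close>
lemma pd_commute_real:
  fixes h :: "real^'n \<Rightarrow> real"
  assumes U: "open U" "x \<in> U"
    and dh: "\<And>y. y \<in> U \<Longrightarrow> h differentiable (at y)"
    and dhi: "\<And>y. y \<in> U \<Longrightarrow> pd i h differentiable (at y)"
    and dhj: "\<And>y. y \<in> U \<Longrightarrow> pd j h differentiable (at y)"
    and cij: "isCont (pd j (pd i h)) x" and cji: "isCont (pd i (pd j h)) x"
  shows "pd j (pd i h) x = pd i (pd j h) x"
proof (rule ccontr)
  define A where "A = pd j (pd i h) x"
  define B where "B = pd i (pd j h) x"
  define e where "e = \<bar>A - B\<bar> / 2"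
  assume "pd j (pd i h) x \<noteq> pd i (pd j h) x"
  then have e: "e > 0" unfolding e_def A_def B_def by simp
  obtain r where r: "r > 0" "ball x r \<subseteq> U" using U open_contains_ball by blast
  obtain d1 where d1: "d1 > 0" "\<And>y. dist y x < d1 \<Longrightarrow> dist (pd j (pd i h) y) A < e"
    using cij e unfolding continuous_at_eps_delta A_def by blast
  obtain d2 where d2: "d2 > 0" "\<And>y. dist y x < d2 \<Longrightarrow> dist (pd i (pd j h) y) B < e"
    using cji e unfolding continuous_at_eps_delta B_def by blast
  define t where "t = min r (min d1 d2) / 4"
  have t: "0 < t" "2 * t < r" "2 * t < d1" "2 * t < d2" using r d1 d2 unfolding t_def by auto
  have near: "dist (x + a *\<^sub>R axis k 1 + b *\<^sub>R axis l 1) x < 2 * t"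
    if "0 < a" "a < t" "0 < b" "b < t" for a b k l
    using dist_add_axes[of x a k b l] that by (simp add: dist_commute)
  obtain \<xi> \<eta> where p: "0 < \<xi>" "\<xi> < t" "0 < \<eta>" "\<eta> < t"
    "h (x + t *\<^sub>R axis i 1 + t *\<^sub>R axis j 1) - h (x + t *\<^sub>R axis i 1) - h (x + t *\<^sub>R axis j 1) + h x
       = t * t * pd j (pd i h) (x + \<xi> *\<^sub>R axis i 1 + \<eta> *\<^sub>R axis j 1)"
    using second_difference_mvt[OF r(2) dh dhi t(1,2)] by blast
  obtain \<xi>' \<eta>' where q: "0 < \<xi>'" "\<xi>' < t" "0 < \<eta>'" "\<eta>' < t"
    "h (x + t *\<^sub>R axis j 1 + t *\<^sub>R axis i 1) - h (x + t *\<^sub>R axis j 1) - h (x + t *\<^sub>R axis i 1) + h x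
       = t * t * pd i (pd j h) (x + \<xi>' *\<^sub>R axis j 1 + \<eta>' *\<^sub>R axis i 1)"
    using second_difference_mvt[OF r(2) dh dhj t(1,2)] by blast
  have "pd j (pd i h) (x + \<xi> *\<^sub>R axis i 1 + \<eta> *\<^sub>R axis j 1)
      = pd i (pd j h) (x + \<xi>' *\<^sub>R axis j 1 + \<eta>' *\<^sub>R axis i 1)"
    using p(5) q(5) t(1) by (simp add: algebra_simps)
  moreover have "dist (pd j (pd i h) (x + \<xi> *\<^sub>R axis i 1 + \<eta> *\<^sub>R axis j 1)) A < e"
    by (intro d1(2)) (use near[OF p(1-4), of i j] t in linarith)
  moreover have "dist (pd i (pd j h) (x + \<xi>' *\<^sub>R axis j 1 + \<eta>' *\<^sub>R axis i 1)) B < e"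
    by (intro d2(2)) (use near[OF q(1-4), of j i] t in linarith)
  ultimately show False unfolding e_def dist_real_def by (cases "A \<le> B") (auto simp: abs_if split: if_splits)
qed

lemma pd_commute:
  fixes h :: "real^'n \<Rightarrow> 'v::euclidean_space"
  assumes U: "open U" "x \<in> U"
    and dh: "\<And>y. y \<in> U \<Longrightarrow> h differentiable (at y)"
    and dhi: "\<And>y. y \<in> U \<Longrightarrow> pd i h differentiable (at y)"
    and dhj: "\<And>y. y \<in> U \<Longrightarrow> pd j h differentiable (at y)"
    and cij: "isCont (pd j (pd i h)) x" and cji: "isCont (pd i (pd j h)) x"
  shows "pd j (pd i h) x = pd i (pd j h) x"
proof (rule euclidean_eqI)
  fix b :: 'v
  define hb where "hb y = h y \<bullet> b" for y
  have pd_hb: "pd i hb y = pd i h y \<bullet> b" "pd j hb y = pd j h y \<bullet> b" if "y \<in> U" for y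
    unfolding hb_def by (simp_all add: pd_inner_left dh that)
  have dhb: "pd i hb differentiable (at y)" "pd j hb differentiable (at y)" if "y \<in> U" for y
    using differentiable_cong_open[OF U(1) that pd_hb(1)] differentiable_cong_open[OF U(1) that pd_hb(2)]
      dhi dhj that by (auto intro: differentiable_inner differentiable_const)
  have pd2_hb: "pd j (pd i hb) y = pd j (pd i h) y \<bullet> b" "pd i (pd j hb) y = pd i (pd j h) y \<bullet> b"
    if "y \<in> U" for y
  proof -
    have "pd j (pd i hb) y = pd j (\<lambda>z. pd i h z \<bullet> b) y"
      by (rule pd_cong_open[OF U(1) that pd_hb(1)])
    also have "\<dots> = pd j (pd i h) y \<bullet> b" by (rule pd_inner_left[OF dhi[OF that]])
    finally show "pd j (pd i hb) y = pd j (pd i h) y \<bullet> b" .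
    have "pd i (pd j hb) y = pd i (\<lambda>z. pd j h z \<bullet> b) y"
      by (rule pd_cong_open[OF U(1) that pd_hb(2)])
    also have "\<dots> = pd i (pd j h) y \<bullet> b" by (rule pd_inner_left[OF dhj[OF that]])
    finally show "pd i (pd j hb) y = pd i (pd j h) y \<bullet> b" .
  qed
  have near_x: "eventually (\<lambda>y. y \<in> U) (nhds x)" using U eventually_nhds by blast
  have "isCont (pd j (pd i hb)) x" "isCont (pd i (pd j hb)) x"
    using isCont_cong[OF eventually_mono[OF near_x pd2_hb(1)]]
      isCont_cong[OF eventually_mono[OF near_x pd2_hb(2)]] cij cji
    by (auto intro: continuous_intros)
  moreover have "hb differentiable (at y)" if "y \<in> U" for y
    unfolding hb_def[abs_def] using dh[OF that] by (intro differentiable_inner differentiable_const)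
  ultimately have "pd j (pd i hb) x = pd i (pd j hb) x"
    using pd_commute_real[OF U _ dhb] by blast
  then show "pd j (pd i h) x \<bullet> b = pd i (pd j h) x \<bullet> b" using pd2_hb[OF U(2)] by simp
qed

lemma sum_swap_pairs:
  "(\<Sum>a\<in>A. \<Sum>b\<in>B. \<Sum>c\<in>C. \<Sum>d\<in>D. F a b c d) = (\<Sum>c\<in>C. \<Sum>d\<in>D. \<Sum>a\<in>A. \<Sum>b\<in>B. F a b c d)"
proof -
  have "(\<Sum>a\<in>A. \<Sum>b\<in>B. \<Sum>c\<in>C. \<Sum>d\<in>D. F a b c d) = (\<Sum>a\<in>A. \<Sum>c\<in>C. \<Sum>b\<in>B. \<Sum>d\<in>D. F a b c d)"
    by (intro sum.cong refl) (rule sum.swap)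
  also have "\<dots> = (\<Sum>c\<in>C. \<Sum>a\<in>A. \<Sum>b\<in>B. \<Sum>d\<in>D. F a b c d)"
    by (rule sum.swap)
  also have "\<dots> = (\<Sum>c\<in>C. \<Sum>a\<in>A. \<Sum>d\<in>D. \<Sum>b\<in>B. F a b c d)"
    by (intro sum.cong refl) (rule sum.swap)
  also have "\<dots> = (\<Sum>c\<in>C. \<Sum>d\<in>D. \<Sum>a\<in>A. \<Sum>b\<in>B. F a b c d)"
    by (intro sum.cong refl) (rule sum.swap)
  finally show ?thesis .
qed

text \<open>The Riemann tensor in coordinates, with G the inverse metric, C i j m = Q(d_i d_j f, d_m f),
  Gam = G C the Christoffel symbols and dG, dGam their derivatives; T stands for the third-order
  terms Q(d_i d_j d_k f, d_m f) and NN for the products of normal parts left over from the Gauss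
  formula in P.\<close>
lemma curvature_index_identity:
  fixes G :: "'n::finite \<Rightarrow> 'n \<Rightarrow> real" and C :: "'n \<Rightarrow> 'n \<Rightarrow> 'n \<Rightarrow> real"
    and T P NN :: "'n \<Rightarrow> 'n \<Rightarrow> 'n \<Rightarrow> 'n \<Rightarrow> real"
  defines "Gam \<equiv> \<lambda>l j k. \<Sum>m\<in>UNIV. G l m * C j k m"
  defines "dG \<equiv> \<lambda>c k l. - (\<Sum>a\<in>UNIV. \<Sum>b\<in>UNIV. G k a * (C c a b + C c b a) * G b l)"
  defines "dGam \<equiv> \<lambda>i l j k. \<Sum>m\<in>UNIV. dG i l m * C j k m + G l m * (T i j k m + P i j k m)"
  assumes T: "\<And>i j k m. T i j k m = T j i k m"
    and P: "\<And>a b k m. P a b k m = (\<Sum>c\<in>UNIV. Gam c b k * C a m c) + NN b k a m"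
  shows "dGam i l j k - dGam j l i k + (\<Sum>m\<in>UNIV. Gam l i m * Gam m j k - Gam l j m * Gam m i k)
       = (\<Sum>m\<in>UNIV. G l m * (NN j k i m - NN i k j m))"
proof -
  have dGam_eq: "dGam i l j k = (\<Sum>m\<in>UNIV. G l m * (T i j k m + NN j k i m)) - (\<Sum>b\<in>UNIV. Gam b j k * Gam l i b)"
    for i j k
  proof -
    have e1: "(\<Sum>m\<in>UNIV. dG i l m * C j k m) =
        - (\<Sum>b\<in>UNIV. Gam b j k * (\<Sum>a\<in>UNIV. G l a * C i a b)) - (\<Sum>b\<in>UNIV. Gam b j k * Gam l i b)"
    proof -
      have "(\<Sum>m\<in>UNIV. dG i l m * C j k m) = - (\<Sum>m\<in>UNIV. \<Sum>a\<in>UNIV. \<Sum>b\<in>UNIV. G l a * (C i a b + C i b a) * G b m * C j k m)"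
        unfolding dG_def by (simp add: sum_distrib_right sum_negf)
      also have "\<dots> = - (\<Sum>a\<in>UNIV. \<Sum>b\<in>UNIV. \<Sum>m\<in>UNIV. G l a * (C i a b + C i b a) * (G b m * C j k m))"
        by (subst sum.swap, subst (2) sum.swap) (simp add: mult.assoc)
      also have "\<dots> = - (\<Sum>a\<in>UNIV. \<Sum>b\<in>UNIV. G l a * (C i a b + C i b a) * Gam b j k)"
        unfolding Gam_def by (simp add: sum_distrib_left)
      also have "\<dots> = - (\<Sum>b\<in>UNIV. Gam b j k * (\<Sum>a\<in>UNIV. G l a * C i a b)) - (\<Sum>b\<in>UNIV. Gam b j k * (\<Sum>a\<in>UNIV. G l a * C i b a))"
        by (subst sum.swap) (simp add: sum_distrib_left sum.distrib algebra_simps sum_subtractf)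
      finally show ?thesis unfolding Gam_def by simp
    qed
    have e2: "(\<Sum>m\<in>UNIV. G l m * P i j k m) = (\<Sum>b\<in>UNIV. Gam b j k * (\<Sum>a\<in>UNIV. G l a * C i a b)) + (\<Sum>m\<in>UNIV. G l m * NN j k i m)"
    proof -
      have "(\<Sum>m\<in>UNIV. G l m * P i j k m) = (\<Sum>m\<in>UNIV. \<Sum>c\<in>UNIV. G l m * Gam c j k * C i m c) + (\<Sum>m\<in>UNIV. G l m * NN j k i m)"
        unfolding P by (simp add: algebra_simps sum.distrib sum_distrib_left)
      also have "(\<Sum>m\<in>UNIV. \<Sum>c\<in>UNIV. G l m * Gam c j k * C i m c) = (\<Sum>b\<in>UNIV. Gam b j k * (\<Sum>a\<in>UNIV. G l a * C i a b))"
        by (subst sum.swap) (simp add: sum_distrib_left algebra_simps)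
      finally show ?thesis .
    qed
    have "dGam i l j k = (\<Sum>m\<in>UNIV. dG i l m * C j k m) + (\<Sum>m\<in>UNIV. G l m * T i j k m) + (\<Sum>m\<in>UNIV. G l m * P i j k m)"
      unfolding dGam_def by (simp add: sum.distrib algebra_simps)
    then show ?thesis using e1 e2 by (simp add: sum.distrib algebra_simps)
  qed
  have T_sum: "(\<Sum>m\<in>UNIV. G l m * T i j k m) = (\<Sum>m\<in>UNIV. G l m * T j i k m)" using T by simp
  show ?thesis
    unfolding dGam_eq[of i j k] dGam_eq[of j i k]
    using T_sum by (simp add: sum.distrib sum_subtractf algebra_simps)
qed

text \<open>Here a, b, c are the pivots and p, r, s the multipliers of the LDL decomposition of G.\<close>
lemma quadratic_form_ldl_3:
  fixes Q :: "'v::real_vector \<Rightarrow> 'v \<Rightarrow> real" and G :: "3 \<Rightarrow> 3 \<Rightarrow> real" and M :: "3 \<Rightarrow> 'v"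
  assumes Q_bilinear: "bilinear Q" and Q_sym: "\<And>u w. Q u w = Q w u"
    and G_sym: "\<And>i j. G i j = G j i"
    and G: "G 1 1 = a" "G 1 2 = a * p" "G 1 3 = a * r" "G 2 2 = b + a * p * p"
       "G 2 3 = a * p * r + b * s" "G 3 3 = a * r * r + b * s * s + c"
  shows "(\<Sum>i\<in>UNIV. \<Sum>m\<in>UNIV. G i m * Q (M i) (M m))
     = a * Q (M 1 + p *\<^sub>R M 2 + r *\<^sub>R M 3) (M 1 + p *\<^sub>R M 2 + r *\<^sub>R M 3)
       + b * Q (M 2 + s *\<^sub>R M 3) (M 2 + s *\<^sub>R M 3) + c * Q (M 3) (M 3)"
proof -
  note Q_linear = bilinear_ladd[OF Q_bilinear] bilinear_radd[OF Q_bilinear]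
    bilinear_lmul[OF Q_bilinear] bilinear_rmul[OF Q_bilinear]
  have "Q (M 2) (M 1) = Q (M 1) (M 2)" "Q (M 3) (M 1) = Q (M 1) (M 3)" "Q (M 3) (M 2) = Q (M 2) (M 3)"
    using Q_sym by auto
  moreover have "G 2 1 = a * p" "G 3 1 = a * r" "G 3 2 = a * p * r + b * s" using G_sym G by metis+
  ultimately show ?thesis
    unfolding sum_3 Q_linear G by (simp add: algebra_simps)
qed

lemma pos_def_ldl_3:
  fixes G :: "3 \<Rightarrow> 3 \<Rightarrow> real"
  assumes G_sym: "\<And>i j. G i j = G j i"
    and G_pos: "\<And>v. v \<noteq> 0 \<Longrightarrow> (\<Sum>i\<in>UNIV. \<Sum>m\<in>UNIV. G i m * v $ i * v $ m) > 0"
  obtains a b c p r s where "a > 0" "b > 0" "c > 0"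
    "G 1 1 = a" "G 1 2 = a * p" "G 1 3 = a * r" "G 2 2 = b + a * p * p"
    "G 2 3 = a * p * r + b * s" "G 3 3 = a * r * r + b * s * s + c"
proof -
  define a where "a = G 1 1"
  have "(axis 1 1 :: real^3) \<noteq> 0" by (simp add: axis_eq_0_iff)
  from G_pos[OF this] have a: "a > 0" unfolding a_def sum_3 by (simp add: axis_def)
  define p where "p = G 1 2 / a"
  define r where "r = G 1 3 / a"
  define b where "b = G 2 2 - a * p * p"
  define s where "s = (G 2 3 - a * p * r) / b"
  define c where "c = G 3 3 - a * r * r - b * s * s"
  have G: "G 1 1 = a" "G 1 2 = a * p" "G 1 3 = a * r" "G 2 2 = b + a * p * p"
     "G 3 3 = a * r * r + b * s * s + c"
    using a unfolding a_def p_def r_def b_def c_def by auto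
  define v :: "real^3" where "v = (\<chi> i. if i = 1 then - p else if i = 2 then 1 else 0)"
  have v: "v $ 1 = - p" "v $ 2 = 1" "v $ 3 = 0" unfolding v_def by simp_all
  then have "v \<noteq> 0" by (metis zero_index zero_neq_one)
  from G_pos[OF this] have b: "b > 0"
    unfolding sum_3 v using G G_sym[of 2 1] G_sym[of 3 1] G_sym[of 3 2] by (simp add: algebra_simps)
  then have G23: "G 2 3 = a * p * r + b * s" unfolding s_def by simp
  define u :: "real^3" where "u = (\<chi> i. if i = 1 then p * s - r else if i = 2 then - s else 1)"
  have u: "u $ 1 = p * s - r" "u $ 2 = - s" "u $ 3 = 1" unfolding u_def by simp_all
  then have "u \<noteq> 0" by (metis zero_index zero_neq_one)
  moreover have "(\<Sum>i\<in>UNIV. \<Sum>m\<in>UNIV. G i m * u $ i * u $ m) = c"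
    using quadratic_form_ldl_3[OF bilinear_times _ G_sym G(1-4) G23 G(5), of "\<lambda>i. u $ i"]
    unfolding u by (simp add: algebra_simps)
  ultimately have "c > 0" using G_pos by fastforce
  with a b G G23 show ?thesis using that by blast
qed

lemma weighted_trace_nonpos_3:
  fixes Q :: "'v::real_vector \<Rightarrow> 'v \<Rightarrow> real" and G :: "3 \<Rightarrow> 3 \<Rightarrow> real" and M :: "3 \<Rightarrow> 'v"
  assumes Q_bilinear: "bilinear Q" and Q_sym: "\<And>u w. Q u w = Q w u"
    and G_sym: "\<And>i j. G i j = G j i"
    and G_pos: "\<And>v. v \<noteq> 0 \<Longrightarrow> (\<Sum>i\<in>UNIV. \<Sum>m\<in>UNIV. G i m * v $ i * v $ m) > 0"
    and Q_nonpos: "\<And>c1 c2 c3. Q (c1 *\<^sub>R M 1 + c2 *\<^sub>R M 2 + c3 *\<^sub>R M 3) (c1 *\<^sub>R M 1 + c2 *\<^sub>R M 2 + c3 *\<^sub>R M 3) \<le> 0"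
  shows "(\<Sum>i\<in>UNIV. \<Sum>m\<in>UNIV. G i m * Q (M i) (M m)) \<le> 0"
proof -
  obtain a b c p r s where pivots: "a > 0" "b > 0" "c > 0" and
    G: "G 1 1 = a" "G 1 2 = a * p" "G 1 3 = a * r" "G 2 2 = b + a * p * p"
      "G 2 3 = a * p * r + b * s" "G 3 3 = a * r * r + b * s * s + c"
    using pos_def_ldl_3[OF G_sym G_pos] by blast
  have "Q (M 1 + p *\<^sub>R M 2 + r *\<^sub>R M 3) (M 1 + p *\<^sub>R M 2 + r *\<^sub>R M 3) \<le> 0"
    "Q (M 2 + s *\<^sub>R M 3) (M 2 + s *\<^sub>R M 3) \<le> 0" "Q (M 3) (M 3) \<le> 0"
    using Q_nonpos[of 1 p r] Q_nonpos[of 0 1 s] Q_nonpos[of 0 0 1] by simp_all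
  then show ?thesis
    unfolding quadratic_form_ldl_3[OF Q_bilinear Q_sym G_sym G] using pivots
    by (simp add: add_nonpos_nonpos mult_pos_neg mult_nonneg_nonpos less_imp_le)
qed

section \<open>Spacelike immersions and the Gauss equation\<close>

locale symmetric_bilinear_form =
  fixes Q :: "'v::euclidean_space \<Rightarrow> 'v \<Rightarrow> real"
  assumes Q_bilinear: "bilinear Q" and Q_sym: "Q u w = Q w u"
begin

lemma Q_add_left: "Q (u + v) w = Q u w + Q v w" using bilinear_ladd[OF Q_bilinear] by simp
lemma Q_add_right: "Q w (u + v) = Q w u + Q w v" using bilinear_radd[OF Q_bilinear] by simp
lemma Q_diff_left: "Q (u - v) w = Q u w - Q v w" using bilinear_lsub[OF Q_bilinear] by simp
lemma Q_scaleR_left: "Q (c *\<^sub>R u) w = c * Q u w" using bilinear_lmul[OF Q_bilinear] by simp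
lemma Q_scaleR_right: "Q u (c *\<^sub>R w) = c * Q u w" using bilinear_rmul[OF Q_bilinear] by simp
lemma Q_zero_left: "Q 0 w = 0" using bilinear_lzero[OF Q_bilinear] by simp
lemma Q_zero_right: "Q w 0 = 0" using bilinear_rzero[OF Q_bilinear] by simp

lemma Q_sum_left: "Q (\<Sum>i\<in>A. u i) w = (\<Sum>i\<in>A. Q (u i) w)"
  using linear_sum[of "\<lambda>u. Q u w"] Q_bilinear unfolding bilinear_def by (simp add: o_def)

lemma Q_sum_right: "Q w (\<Sum>i\<in>A. u i) = (\<Sum>i\<in>A. Q w (u i))"
  using Q_sum_left Q_sym by simp

lemma differentiable_Q:
  assumes "a differentiable (at y)" "b differentiable (at y)"
  shows "(\<lambda>z. Q (a z) (b z)) differentiable (at y)"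
  using assms bounded_bilinear.FDERIV[OF bilinear_conv_bounded_bilinear[THEN iffD1, OF Q_bilinear]]
  unfolding differentiable_def by blast

lemma pd_Q:
  assumes "a differentiable (at y)" "b differentiable (at y)"
  shows "pd c (\<lambda>z. Q (a z) (b z)) y = Q (pd c a y) (b y) + Q (a y) (pd c b y)"
proof -
  obtain A B where A: "(a has_derivative A) (at y)" and B: "(b has_derivative B) (at y)"
    using assms unfolding differentiable_def by blast
  show ?thesis
    using pd_eq_derivative[OF bounded_bilinear.FDERIV[OF bilinear_conv_bounded_bilinear[THEN iffD1, OF Q_bilinear] A B]]
      pd_eq_derivative[OF A] pd_eq_derivative[OF B] by simp
qed

end

locale spacelike_immersion = symmetric_bilinear_form Q for Q :: "'v::euclidean_space \<Rightarrow> 'v \<Rightarrow> real" +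
  fixes U :: "(real^'n::finite) set" and f :: "real^'n \<Rightarrow> 'v"
  assumes open_U: "open U" and smooth: "smooth_on U f"
    and positive_immersion: "positive_immersion_on Q U f"
begin

lemma differentiable_iter_pd: "y \<in> U \<Longrightarrow> iter_pd is f differentiable (at y)"
  using smooth unfolding smooth_on_def by blast

lemma differentiable_f: "y \<in> U \<Longrightarrow> f differentiable (at y)"
  using differentiable_iter_pd[of y "[]"] by (simp add: iter_pd_def)

lemma differentiable_pd1: "y \<in> U \<Longrightarrow> pd i f differentiable (at y)"
  using differentiable_iter_pd[of y "[i]"] by (simp add: iter_pd_def)

lemma differentiable_pd2: "y \<in> U \<Longrightarrow> pd i (pd j f) differentiable (at y)"
  using differentiable_iter_pd[of y "[i, j]"] by (simp add: iter_pd_def)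

lemma differentiable_pd3: "y \<in> U \<Longrightarrow> pd i (pd j (pd k f)) differentiable (at y)"
  using differentiable_iter_pd[of y "[i, j, k]"] by (simp add: iter_pd_def)

lemma pd2_commute: "y \<in> U \<Longrightarrow> pd i (pd j f) y = pd j (pd i f) y"
  using pd_commute[OF open_U _ differentiable_f differentiable_pd1 differentiable_pd1
      differentiable_imp_continuous_within[OF differentiable_pd2]
      differentiable_imp_continuous_within[OF differentiable_pd2]]
  by simp

lemma pd3_commute: "y \<in> U \<Longrightarrow> pd i (pd j (pd k f)) y = pd j (pd i (pd k f)) y"
  using pd_commute[where h = "pd k f", OF open_U _ differentiable_pd1 differentiable_pd2 differentiable_pd2
      differentiable_imp_continuous_within[OF differentiable_pd3]
      differentiable_imp_continuous_within[OF differentiable_pd3]]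
  by simp

abbreviation g where "g y \<equiv> ind_metric Q f y"
abbreviation G where "G y \<equiv> ginv Q f y"

lemma metric_entry: "g y $ a $ b = Q (pd a f y) (pd b f y)"
  by (simp add: ind_metric_def)

lemma metric_sym: "g y $ a $ b = g y $ b $ a"
  by (simp add: metric_entry Q_sym)

lemma differentiable_metric: "y \<in> U \<Longrightarrow> (\<lambda>z. g z $ a $ b) differentiable (at y)"
  unfolding metric_entry using differentiable_Q differentiable_pd1 by blast

lemma pd_metric:
  "y \<in> U \<Longrightarrow> pd c (\<lambda>z. g z $ a $ b) y = Q (pd c (pd a f) y) (pd b f y) + Q (pd a f y) (pd c (pd b f) y)"
  unfolding metric_entry using pd_Q differentiable_pd1 by blast

lemma Q_tangent: "Q (tangent f y v) (tangent f y v) = v \<bullet> (g y *v v)"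
  unfolding tangent_def Q_sum_left Q_sum_right Q_scaleR_left Q_scaleR_right metric_entry
  by (simp add: inner_vec_def matrix_vector_mult_def sum_distrib_left metric_entry Q_sym ac_simps)

lemma metric_pos_def: "y \<in> U \<Longrightarrow> v \<noteq> 0 \<Longrightarrow> v \<bullet> (g y *v v) > 0"
  using positive_immersion Q_tangent unfolding positive_immersion_on_def by metis

lemma metric_invertible: "y \<in> U \<Longrightarrow> invertible (g y)"
proof -
  assume y: "y \<in> U"
  have "g y *v v = 0 \<Longrightarrow> v = 0" for v using metric_pos_def[OF y, of v] by fastforce
  then obtain B where "B ** g y = mat 1" using matrix_left_invertible_ker by blast
  then show ?thesis unfolding invertible_def using matrix_left_right_inverse by blast
qed

lemma inverse_metric: "y \<in> U \<Longrightarrow> g y ** G y = mat 1 \<and> G y ** g y = mat 1"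
  unfolding ginv_def matrix_inv_def by (rule someI_ex) (use metric_invertible invertible_def in blast)

lemma inverse_metric_sym: "y \<in> U \<Longrightarrow> G y $ a $ b = G y $ b $ a"
proof -
  assume y: "y \<in> U"
  have "transpose (g y) = g y" by (simp add: transpose_def vec_eq_iff metric_sym)
  then have left_inverse: "transpose (G y) ** g y = mat 1"
    using arg_cong[OF conjunct1[OF inverse_metric[OF y]], of transpose] by (simp add: matrix_transpose_mul)
  have "transpose (G y) = transpose (G y) ** (g y ** G y)"
    using inverse_metric[OF y] by simp
  also have "\<dots> = (transpose (G y) ** g y) ** G y"
    by (simp add: matrix_mul_assoc)
  also have "\<dots> = G y"
    using left_inverse by simp
  finally have "transpose (G y) $ b $ a = G y $ b $ a" by simp
  then show ?thesis by (simp add: transpose_def)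
qed

lemma inverse_metric_contract_left:
  "y \<in> U \<Longrightarrow> (\<Sum>l\<in>UNIV. G y $ k $ l * g y $ l $ m) = (if k = m then 1 else 0)"
  using inverse_metric[of y] by (simp add: matrix_matrix_mult_def mat_def vec_eq_iff)

lemma inverse_metric_contract_right:
  "y \<in> U \<Longrightarrow> (\<Sum>l\<in>UNIV. g y $ k $ l * G y $ l $ m) = (if k = m then 1 else 0)"
  using inverse_metric[of y] by (simp add: matrix_matrix_mult_def mat_def vec_eq_iff)

lemma inverse_metric_pos_def:
  assumes x: "x \<in> U" and v: "v \<noteq> 0"
  shows "(\<Sum>i\<in>UNIV. \<Sum>m\<in>UNIV. G x $ i $ m * v $ i * v $ m) > 0"
proof -
  define u where "u = G x *v v"
  have gu: "g x *v u = v" unfolding u_def using inverse_metric[OF x] by (simp add: matrix_vector_mul_assoc)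
  then have "u \<noteq> 0" using v by auto
  then have "u \<bullet> (g x *v u) > 0" by (rule metric_pos_def[OF x])
  also have "u \<bullet> (g x *v u) = (\<Sum>i\<in>UNIV. \<Sum>m\<in>UNIV. G x $ i $ m * v $ i * v $ m)"
    unfolding gu unfolding u_def by (simp add: inner_vec_def matrix_vector_mult_def sum_distrib_left ac_simps)
  finally show ?thesis .
qed

lemma differentiable_inverse_metric:
  assumes x: "x \<in> U"
  shows "(\<lambda>y. G y $ k $ l) differentiable (at x)"
proof -
  define cof where "cof y = det (\<chi> a b. if b = k then axis l 1 $ a else g y $ a $ b)" for y
  have cramer: "G y $ k $ l = cof y / det (g y)" if y: "y \<in> U" for y
  proof -
    have "det (g y) \<noteq> 0" using metric_invertible[OF y] invertible_det_nz by blast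
    moreover have "g y *v (G y *v axis l 1) = axis l 1"
      using inverse_metric[OF y] by (simp add: matrix_vector_mul_assoc)
    ultimately have "G y *v axis l 1 = (\<chi> k. det (\<chi> a b. if b = k then axis l 1 $ a else g y $ a $ b) / det (g y))"
      using cramer by blast
    then show ?thesis
      unfolding cof_def by (simp add: matrix_vector_mult_def axis_def if_distrib vec_eq_iff cong: if_cong)
  qed
  have "(\<lambda>y. (\<chi> a b. if b = k then axis l 1 $ a else g y $ a $ b) $ a $ b) differentiable (at x)" for a b
    by (cases "b = k") (simp_all add: differentiable_metric[OF x])
  then have "(\<lambda>y. cof y / det (g y)) differentiable (at x)"
    unfolding cof_def using metric_invertible[OF x] invertible_det_nz
    by (intro differentiable_divide differentiable_det differentiable_metric[OF x]) auto
  then show ?thesis by (rule differentiable_cong_open[OF open_U x, rotated]) (simp add: cramer)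
qed

lemma pd_inverse_metric:
  assumes x: "x \<in> U"
  shows "pd c (\<lambda>y. G y $ k $ l) x
    = - (\<Sum>a\<in>UNIV. \<Sum>b\<in>UNIV. G x $ k $ a * pd c (\<lambda>y. g y $ a $ b) x * G x $ b $ l)"
proof -
  define dG where "dG m = pd c (\<lambda>y. G y $ k $ m) x" for m
  define dg where "dg m b = pd c (\<lambda>y. g y $ m $ b) x" for m b
  have dG_g: "(\<Sum>m\<in>UNIV. dG m * g x $ m $ b) = - (\<Sum>m\<in>UNIV. G x $ k $ m * dg m b)" for b
  proof -
    have "0 = pd c (\<lambda>y. if k = b then 1 else 0) x" by (rule pd_const[symmetric])
    also have "\<dots> = pd c (\<lambda>y. \<Sum>m\<in>UNIV. G y $ k $ m * g y $ m $ b) x"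
      by (rule pd_cong_open[OF open_U x]) (rule inverse_metric_contract_left[symmetric])
    also have "\<dots> = (\<Sum>m\<in>UNIV. pd c (\<lambda>y. G y $ k $ m * g y $ m $ b) x)"
      by (rule pd_sum) (auto intro!: differentiable_mult differentiable_inverse_metric differentiable_metric x)
    also have "\<dots> = (\<Sum>m\<in>UNIV. dG m * g x $ m $ b + G x $ k $ m * dg m b)"
      unfolding dG_def dg_def
      by (intro sum.cong refl pd_mult differentiable_inverse_metric differentiable_metric x)
    finally show ?thesis by (simp add: sum.distrib eq_neg_iff_add_eq_0)
  qed
  have "dG l = (\<Sum>m\<in>UNIV. dG m * (\<Sum>b\<in>UNIV. g x $ m $ b * G x $ b $ l))"
    unfolding inverse_metric_contract_right[OF x] by (simp add: if_distrib cong: if_cong)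
  also have "\<dots> = (\<Sum>b\<in>UNIV. \<Sum>m\<in>UNIV. dG m * g x $ m $ b * G x $ b $ l)"
    by (simp add: sum_distrib_left mult.assoc) (rule sum.swap)
  also have "\<dots> = (\<Sum>b\<in>UNIV. (\<Sum>m\<in>UNIV. dG m * g x $ m $ b) * G x $ b $ l)"
    by (simp add: sum_distrib_right)
  also have "\<dots> = - (\<Sum>b\<in>UNIV. \<Sum>a\<in>UNIV. G x $ k $ a * dg a b * G x $ b $ l)"
    unfolding dG_g by (simp add: sum_distrib_right sum_negf)
  also have "\<dots> = - (\<Sum>a\<in>UNIV. \<Sum>b\<in>UNIV. G x $ k $ a * dg a b * G x $ b $ l)"
    by (subst sum.swap) (rule refl)
  finally show ?thesis unfolding dG_def dg_def .
qed

definition christoffel_first :: "'n \<Rightarrow> 'n \<Rightarrow> 'n \<Rightarrow> real^'n \<Rightarrow> real" where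
  "christoffel_first i j l y = Q (pd i (pd j f) y) (pd l f y)"

lemma differentiable_christoffel_first: "y \<in> U \<Longrightarrow> christoffel_first i j l differentiable (at y)"
  unfolding christoffel_first_def[abs_def] by (intro differentiable_Q differentiable_pd1 differentiable_pd2)

lemma pd_christoffel_first: "y \<in> U \<Longrightarrow> pd c (christoffel_first i j l) y
    = Q (pd c (pd i (pd j f)) y) (pd l f y) + Q (pd i (pd j f) y) (pd c (pd l f) y)"
  unfolding christoffel_first_def[abs_def] by (intro pd_Q differentiable_pd1 differentiable_pd2)

lemma pd_metric_christoffel_first:
  "y \<in> U \<Longrightarrow> pd c (\<lambda>z. g z $ a $ b) y = christoffel_first c a b y + christoffel_first c b a y"
  unfolding pd_metric christoffel_first_def using Q_sym by simp

lemma christoffel_eq: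
  assumes y: "y \<in> U"
  shows "christoffel Q f k i j y = (\<Sum>l\<in>UNIV. G y $ k $ l * christoffel_first i j l y)"
proof -
  have "pd i (\<lambda>y. g y $ j $ l) y + pd j (\<lambda>y. g y $ i $ l) y - pd l (\<lambda>y. g y $ i $ j) y
      = 2 * christoffel_first i j l y" for l
    unfolding pd_metric_christoffel_first[OF y] unfolding christoffel_first_def
    using pd2_commute[OF y] Q_sym by (simp add: algebra_simps)
  then show ?thesis unfolding christoffel_def ginv_def[symmetric] ind_metric_def[symmetric]
    by (simp add: sum_distrib_left)
qed

lemma pd_christoffel:
  assumes x: "x \<in> U"
  shows "pd c (\<lambda>y. christoffel Q f k i j y) x = (\<Sum>m\<in>UNIV.
      pd c (\<lambda>y. G y $ k $ m) x * christoffel_first i j m x + G x $ k $ m * pd c (christoffel_first i j m) x)"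
proof -
  have "pd c (\<lambda>y. christoffel Q f k i j y) x
      = pd c (\<lambda>y. \<Sum>m\<in>UNIV. G y $ k $ m * christoffel_first i j m y) x"
    by (rule pd_cong_open[OF open_U x]) (rule christoffel_eq)
  also have "\<dots> = (\<Sum>m\<in>UNIV. pd c (\<lambda>y. G y $ k $ m * christoffel_first i j m y) x)"
    by (rule pd_sum)
      (auto intro!: differentiable_mult differentiable_inverse_metric differentiable_christoffel_first x)
  also have "\<dots> = (\<Sum>m\<in>UNIV. pd c (\<lambda>y. G y $ k $ m) x * christoffel_first i j m x
      + G x $ k $ m * pd c (christoffel_first i j m) x)"
    by (intro sum.cong refl pd_mult differentiable_inverse_metric differentiable_christoffel_first x)
  finally show ?thesis .
qed

definition sff :: "real^'n \<Rightarrow> 'n \<Rightarrow> 'n \<Rightarrow> 'v" where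
  "sff x a b = normal_part Q f x (pd a (pd b f) x)"

lemma sff_sym: "x \<in> U \<Longrightarrow> sff x a b = sff x b a"
  unfolding sff_def using pd2_commute by simp

lemma sff_orthogonal:
  assumes x: "x \<in> U"
  shows "Q (sff x a b) (pd d f x) = 0"
proof -
  define w where "w = pd a (pd b f) x"
  have "Q (sff x a b) (pd d f x) = Q w (pd d f x) -
      (\<Sum>k\<in>UNIV. \<Sum>l\<in>UNIV. G x $ k $ l * Q w (pd l f x) * g x $ k $ d)"
    unfolding sff_def normal_part_def w_def[symmetric] ginv_def[symmetric]
      Q_diff_left Q_sum_left Q_scaleR_left metric_entry by simp
  also have "(\<Sum>k\<in>UNIV. \<Sum>l\<in>UNIV. G x $ k $ l * Q w (pd l f x) * g x $ k $ d)
      = (\<Sum>l\<in>UNIV. Q w (pd l f x) * (\<Sum>k\<in>UNIV. g x $ d $ k * G x $ k $ l))"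
    by (subst sum.swap) (simp add: sum_distrib_left metric_sym[of x d] ac_simps)
  also have "\<dots> = Q w (pd d f x)"
    unfolding inverse_metric_contract_right[OF x] by (simp add: if_distrib cong: if_cong)
  finally show ?thesis by simp
qed

lemma gauss_formula:
  assumes x: "x \<in> U"
  shows "pd a (pd b f) x = (\<Sum>c\<in>UNIV. christoffel Q f c a b x *\<^sub>R pd c f x) + sff x a b"
  unfolding sff_def normal_part_def christoffel_eq[OF x] ginv_def[symmetric] christoffel_first_def
    scaleR_sum_left[symmetric]
  by simp

lemma Q_pd2_pd2:
  assumes x: "x \<in> U"
  shows "Q (pd b (pd k f) x) (pd a (pd m f) x)
    = (\<Sum>c\<in>UNIV. christoffel Q f c b k x * christoffel_first a m c x) + Q (sff x b k) (sff x a m)"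
proof -
  have "Q (pd b (pd k f) x) (pd a (pd m f) x) = (\<Sum>c\<in>UNIV. christoffel Q f c b k x
      * Q (pd c f x) (pd a (pd m f) x)) + Q (sff x b k) (pd a (pd m f) x)"
    by (subst gauss_formula[OF x, of b k]) (simp add: Q_add_left Q_sum_left Q_scaleR_left)
  also have "Q (sff x b k) (pd a (pd m f) x) = Q (sff x b k) (sff x a m)"
    by (subst gauss_formula[OF x, of a m]) (simp add: Q_add_right Q_sum_right Q_scaleR_right sff_orthogonal[OF x])
  finally show ?thesis by (simp add: christoffel_first_def Q_sym)
qed

lemma gauss_equation:
  assumes x: "x \<in> U"
  shows "riemann Q f l i j k x
    = (\<Sum>m\<in>UNIV. G x $ l $ m * (Q (sff x j k) (sff x i m) - Q (sff x i k) (sff x j m)))"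
proof -
  let ?C = "\<lambda>a b c. christoffel_first a b c x"
  have pd_christoffel_x: "pd i (\<lambda>y. christoffel Q f l j k y) x = (\<Sum>m\<in>UNIV.
      (- (\<Sum>a\<in>UNIV. \<Sum>b\<in>UNIV. G x $ l $ a * (?C i a b + ?C i b a) * G x $ b $ m)) * ?C j k m
      + G x $ l $ m * (Q (pd i (pd j (pd k f)) x) (pd m f x) + Q (pd j (pd k f) x) (pd i (pd m f) x)))"
    for i l j k
    unfolding pd_christoffel[OF x] pd_inverse_metric[OF x] pd_metric_christoffel_first[OF x]
      pd_christoffel_first[OF x] christoffel_first_def ..
  have third: "Q (pd i (pd j (pd k f)) x) (pd m f x) = Q (pd j (pd i (pd k f)) x) (pd m f x)" for i j k m
    using pd3_commute[OF x] by simp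
  have "Q (pd b (pd k f) x) (pd a (pd m f) x)
      = (\<Sum>c\<in>UNIV. (\<Sum>m\<in>UNIV. G x $ c $ m * ?C b k m) * ?C a m c) + Q (sff x b k) (sff x a m)"
    for a b k m
    using Q_pd2_pd2[OF x] unfolding christoffel_eq[OF x] .
  from curvature_index_identity[where G = "\<lambda>a b. G x $ a $ b" and C = ?C, OF third this]
  show ?thesis
    unfolding riemann_def pd_christoffel_x christoffel_eq[OF x] by simp
qed

lemma mean_curv_eq_sff: "mean_curv Q f x = (\<Sum>i\<in>UNIV. \<Sum>m\<in>UNIV. G x $ i $ m *\<^sub>R sff x i m)"
  unfolding mean_curv_def sff_def ginv_def ..

lemma ricci_of_maximal:
  assumes x: "x \<in> U" and maximal: "mean_curv Q f x = 0"
  shows "ricci Q f j k x = - (\<Sum>i\<in>UNIV. \<Sum>m\<in>UNIV. G x $ i $ m * Q (sff x i k) (sff x j m))"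
proof -
  have "(\<Sum>i\<in>UNIV. \<Sum>m\<in>UNIV. G x $ i $ m * Q (sff x j k) (sff x i m)) = Q (sff x j k) (mean_curv Q f x)"
    unfolding mean_curv_eq_sff Q_sum_right Q_scaleR_right ..
  also have "\<dots> = 0" using maximal Q_zero_right by simp
  finally show ?thesis
    unfolding ricci_def gauss_equation[OF x] by (simp add: right_diff_distrib sum_subtractf)
qed

lemma Q_normal_nonpos:
  assumes x: "x \<in> U"
    and maximal_positive: "\<And>S. subspace S \<Longrightarrow> pos_def_on Q S \<Longrightarrow> dim S \<le> CARD('n)"
    and normal: "\<And>d. Q w (pd d f x) = 0"
  shows "Q w w \<le> 0"
proof (rule ccontr)
  assume "\<not> Q w w \<le> 0"
  then have w: "Q w w > 0" by simp
  define L :: "(real^'n) \<times> real \<Rightarrow> 'v" where "L p = tangent f x (fst p) + snd p *\<^sub>R w" for p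
  have "linear L"
    unfolding L_def[abs_def] tangent_def
    by (auto intro!: linearI simp: sum.distrib algebra_simps scaleR_sum_right)
  have tangent_w: "Q (tangent f x u) w = 0" for u
    unfolding tangent_def Q_sum_left Q_scaleR_left using normal Q_sym by simp
  have QL: "Q (L p) (L p) = Q (tangent f x (fst p)) (tangent f x (fst p)) + snd p * snd p * Q w w" for p
    unfolding L_def Q_add_left Q_add_right Q_scaleR_left Q_scaleR_right tangent_w using tangent_w Q_sym by simp
  have QL_pos: "Q (L p) (L p) > 0" if "p \<noteq> 0" for p
  proof (cases "fst p = 0")
    case True
    then have "snd p \<noteq> 0" using that by (simp add: prod_eq_iff)
    then have "snd p * snd p > 0" by (simp add: less_le)
    moreover have "tangent f x (fst p) = 0" using True by (simp add: tangent_def)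
    ultimately show ?thesis unfolding QL using w by (simp add: Q_zero_left)
  next
    case False
    then have "Q (tangent f x (fst p)) (tangent f x (fst p)) > 0"
      using positive_immersion x unfolding positive_immersion_on_def by blast
    then show ?thesis unfolding QL using w by (simp add: add_pos_nonneg)
  qed
  then have "inj L"
    using linear_injective_0[OF \<open>linear L\<close>] Q_zero_left by fastforce
  have "pos_def_on Q (range L)"
    unfolding pos_def_on_def using QL_pos linear_0[OF \<open>linear L\<close>] by (metis imageE)
  moreover have "dim (range L) = CARD('n) + 1"
    using dim_image_eq[OF \<open>linear L\<close>, of UNIV] \<open>inj L\<close> by (simp add: inj_on_def inj_def)
  ultimately show False
    using maximal_positive[OF linear_subspace_image[OF \<open>linear L\<close> subspace_UNIV]] by simp
qed

lemma ricci_quadratic_form: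
  assumes x: "x \<in> U" and maximal: "mean_curv Q f x = 0"
  shows "(\<Sum>j\<in>UNIV. \<Sum>k\<in>UNIV. ricci Q f j k x * v $ j * v $ k)
    = - (\<Sum>i\<in>UNIV. \<Sum>m\<in>UNIV. G x $ i $ m
           * Q (\<Sum>k\<in>UNIV. v $ k *\<^sub>R sff x i k) (\<Sum>j\<in>UNIV. v $ j *\<^sub>R sff x m j))"
proof -
  let ?F = "\<lambda>i m j k. G x $ i $ m * Q (sff x i k) (sff x j m) * v $ j * v $ k"
  have "G x $ i $ m * Q (\<Sum>k\<in>UNIV. v $ k *\<^sub>R sff x i k) (\<Sum>j\<in>UNIV. v $ j *\<^sub>R sff x m j)
      = (\<Sum>j\<in>UNIV. \<Sum>k\<in>UNIV. ?F i m j k)" for i m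
    unfolding Q_sum_left Q_sum_right Q_scaleR_left Q_scaleR_right sff_sym[OF x, of m]
    by (simp add: sum_distrib_left ac_simps)
  then have "(\<Sum>i\<in>UNIV. \<Sum>m\<in>UNIV. G x $ i $ m
      * Q (\<Sum>k\<in>UNIV. v $ k *\<^sub>R sff x i k) (\<Sum>j\<in>UNIV. v $ j *\<^sub>R sff x m j))
      = (\<Sum>i\<in>UNIV. \<Sum>m\<in>UNIV. \<Sum>j\<in>UNIV. \<Sum>k\<in>UNIV. ?F i m j k)"
    by simp
  also have "\<dots> = (\<Sum>j\<in>UNIV. \<Sum>k\<in>UNIV. \<Sum>i\<in>UNIV. \<Sum>m\<in>UNIV. ?F i m j k)"
    by (rule sum_swap_pairs)
  moreover have "(\<Sum>j\<in>UNIV. \<Sum>k\<in>UNIV. ricci Q f j k x * v $ j * v $ k)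
      = - (\<Sum>j\<in>UNIV. \<Sum>k\<in>UNIV. \<Sum>i\<in>UNIV. \<Sum>m\<in>UNIV. ?F i m j k)"
    unfolding ricci_of_maximal[OF x maximal] by (simp add: sum_distrib_right sum_negf)
  ultimately show ?thesis by simp
qed

end

theorem corollary1:
  fixes Q :: "'v::euclidean_space \<Rightarrow> 'v \<Rightarrow> real"
    and q :: nat
    and U :: "(real^3) set"
    and f :: "real^3 \<Rightarrow> 'v"
  assumes "signature_form Q 3 q"
    and "open U"
    and "smooth_on U f"
    and "positive_immersion_on Q U f"
    and "maximal_on Q U f"
  shows "nonneg_ricci_on Q U f"
proof -
  have Q_bilinear: "bilinear Q" and Q_sym: "\<And>u w. Q u w = Q w u"
    and maximal_positive: "\<And>S. subspace S \<Longrightarrow> pos_def_on Q S \<Longrightarrow> dim S \<le> CARD(3)"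
    using assms(1) unfolding signature_form_def by auto
  interpret spacelike_immersion Q U f
    using Q_bilinear Q_sym assms(2-4) by unfold_locales
  show ?thesis unfolding nonneg_ricci_on_def
  proof (intro ballI allI)
    fix x v assume x: "x \<in> U"
    define M where "M i = (\<Sum>k\<in>UNIV. v $ k *\<^sub>R sff x i k)" for i
    have "Q (M i) (pd d f x) = 0" for i d
      unfolding M_def Q_sum_left Q_scaleR_left sff_orthogonal[OF x] by simp
    then have "Q (c1 *\<^sub>R M 1 + c2 *\<^sub>R M 2 + c3 *\<^sub>R M 3) (pd d f x) = 0" for c1 c2 c3 d
      by (simp add: Q_add_left Q_scaleR_left)
    then have "Q (c1 *\<^sub>R M 1 + c2 *\<^sub>R M 2 + c3 *\<^sub>R M 3) (c1 *\<^sub>R M 1 + c2 *\<^sub>R M 2 + c3 *\<^sub>R M 3) \<le> 0"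
      for c1 c2 c3
      using Q_normal_nonpos[OF x maximal_positive] by blast
    then have "(\<Sum>i\<in>UNIV. \<Sum>m\<in>UNIV. G x $ i $ m * Q (M i) (M m)) \<le> 0"
      using weighted_trace_nonpos_3[where G = "\<lambda>i m. G x $ i $ m",
            OF Q_bilinear Q_sym inverse_metric_sym[OF x] inverse_metric_pos_def[OF x]]
      by blast
    moreover have "mean_curv Q f x = 0" using assms(5) x unfolding maximal_on_def by blast
    ultimately show "0 \<le> (\<Sum>j\<in>UNIV. \<Sum>k\<in>UNIV. ricci Q f j k x * v $ j * v $ k)"
      by (simp add: ricci_quadratic_form[OF x] M_def)
  qed
qed

end
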